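(* For every liner $X$ the following are equivalent: (1) $X$ is $0$-hypoparallel; (2) $X$ is $0$-parallel; (3) any two disjoint lines in $X$ are skew; (4) $X$ is projective; (5) $X$ is strongly regular; (6) $X$ is modular.
   Context: A liner is a set $X$ of points with a family of subsets called lines such that any two distinct points lie in a unique line and every line contains at least two points. For distinct $x,y$, $\overline{xy}$ is the line through them and $\overline{xx}:=\{x\}$. A set is flat if it contains $\overline{xy}$ for all its distinct points; $\overline A$ is the smallest flat containing $A$; the rank $\|A\|$ is the smallest cardinality of $B\subseteq X$ with $A\subseteq\overline B$; a plane is a flat of rank 3. For a cardinal $\kappa$, $X$ is $\kappa$-hypoparallel (resp. $\kappa$-parallel) if for every plane $P$, line $L\subseteq P$ and point $x\in P\setminus L$ there are at most (resp. exactly) $\kappa$ lines $\Lambda$ with $x\in\Lambda\subseteq P\setminus L$. Two lines $A,B$ are skew if $\|A\cup B\|=4$. $X$ is projective if for all $o,x,y\in X$, $p\in\overline{xy}$ and $v\in\overline{oy}\setminus\{p\}$ we have $\overline{vp}\cap\overline{ox}\neq\varnothing$. $X$ is strongly regular if for every nonempty flat $A$ and $b\in X\setminus A$, $\overline{A\cup\{b\}}=\bigcup_{a\in A}\overline{ab}$. $X$ is modular if $\|A\cap B\|+\|A\cup B\|=\|A\|+\|B\|$ for all flats $A,B$. *)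

theory Defs
  imports Main
begin

definition liner :: "'a set \<Rightarrow> 'a set set \<Rightarrow> bool" where
  "liner X L \<equiv>
     (\<forall>\<Lambda>\<in>L. \<Lambda> \<subseteq> X \<and> (\<exists>x y. x \<noteq> y \<and> x \<in> \<Lambda> \<and> y \<in> \<Lambda>)) \<and>
     (\<forall>x\<in>X. \<forall>y\<in>X. x \<noteq> y \<longrightarrow> (\<exists>!\<Lambda>. \<Lambda> \<in> L \<and> x \<in> \<Lambda> \<and> y \<in> \<Lambda>))"

definition line_through :: "'a set set \<Rightarrow> 'a \<Rightarrow> 'a \<Rightarrow> 'a set" where
  "line_through L x y \<equiv> (if x = y then {x} else (THE \<Lambda>. \<Lambda> \<in> L \<and> x \<in> \<Lambda> \<and> y \<in> \<Lambda>))"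

definition flat :: "'a set \<Rightarrow> 'a set set \<Rightarrow> 'a set \<Rightarrow> bool" where
  "flat X L A \<equiv> A \<subseteq> X \<and> (\<forall>x\<in>A. \<forall>y\<in>A. x \<noteq> y \<longrightarrow> line_through L x y \<subseteq> A)"

definition flat_hull :: "'a set \<Rightarrow> 'a set set \<Rightarrow> 'a set \<Rightarrow> 'a set" where
  "flat_hull X L A \<equiv> \<Inter>{F. flat X L F \<and> A \<subseteq> F}"

definition generators :: "'a set \<Rightarrow> 'a set set \<Rightarrow> 'a set \<Rightarrow> 'a set set" where
  "generators X L A \<equiv> {B. B \<subseteq> X \<and> A \<subseteq> flat_hull X L B}"

text \<open>A generating set of smallest cardinality; its cardinality is the rank.\<close>
definition rank_witness :: "'a set \<Rightarrow> 'a set set \<Rightarrow> 'a set \<Rightarrow> 'a set" where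
  "rank_witness X L A \<equiv> (SOME B. B \<in> generators X L A \<and>
      (\<forall>C\<in>generators X L A. (card_of B, card_of C) \<in> ordLeq))"

definition rank_is :: "'a set \<Rightarrow> 'a set set \<Rightarrow> 'a set \<Rightarrow> nat \<Rightarrow> bool" where
  "rank_is X L A n \<equiv>
     (\<exists>B\<in>generators X L A. finite B \<and> card B = n) \<and>
     (\<forall>B\<in>generators X L A. finite B \<longrightarrow> n \<le> card B)"

definition plane :: "'a set \<Rightarrow> 'a set set \<Rightarrow> 'a set \<Rightarrow> bool" where
  "plane X L P \<equiv> flat X L P \<and> rank_is X L P 3"

definition parallels_in :: "'a set \<Rightarrow> 'a set set \<Rightarrow> 'a set \<Rightarrow> 'a set \<Rightarrow> 'a \<Rightarrow> 'a set set" where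
  "parallels_in X L P M x \<equiv> {\<Lambda>\<in>L. x \<in> \<Lambda> \<and> \<Lambda> \<subseteq> P - M}"

definition hypoparallel :: "nat \<Rightarrow> 'a set \<Rightarrow> 'a set set \<Rightarrow> bool" where
  "hypoparallel \<kappa> X L \<equiv> \<forall>P M x. plane X L P \<and> M \<in> L \<and> M \<subseteq> P \<and> x \<in> P - M \<longrightarrow>
      finite (parallels_in X L P M x) \<and> card (parallels_in X L P M x) \<le> \<kappa>"

definition parallel :: "nat \<Rightarrow> 'a set \<Rightarrow> 'a set set \<Rightarrow> bool" where
  "parallel \<kappa> X L \<equiv> \<forall>P M x. plane X L P \<and> M \<in> L \<and> M \<subseteq> P \<and> x \<in> P - M \<longrightarrow>
      finite (parallels_in X L P M x) \<and> card (parallels_in X L P M x) = \<kappa>"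

definition skew :: "'a set \<Rightarrow> 'a set set \<Rightarrow> 'a set \<Rightarrow> 'a set \<Rightarrow> bool" where
  "skew X L A B \<equiv> rank_is X L (A \<union> B) 4"

definition projective :: "'a set \<Rightarrow> 'a set set \<Rightarrow> bool" where
  "projective X L \<equiv> \<forall>w\<in>X. \<forall>x\<in>X. \<forall>y\<in>X. \<forall>p\<in>line_through L x y.
      \<forall>v\<in>line_through L w y - {p}. line_through L v p \<inter> line_through L w x \<noteq> {}"

definition strongly_regular :: "'a set \<Rightarrow> 'a set set \<Rightarrow> bool" where
  "strongly_regular X L \<equiv> \<forall>A b. flat X L A \<and> A \<noteq> {} \<and> b \<in> X - A \<longrightarrow>
      flat_hull X L (A \<union> {b}) = (\<Union>a\<in>A. line_through L a b)"

text \<open>Modularity with cardinal arithmetic: the cardinal sums are compared via disjoint unions.\<close>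
definition modular :: "'a set \<Rightarrow> 'a set set \<Rightarrow> bool" where
  "modular X L \<equiv> \<forall>A B. flat X L A \<and> flat X L B \<longrightarrow>
      (card_of (rank_witness X L (A \<inter> B) <+> rank_witness X L (A \<union> B)),
       card_of (rank_witness X L A <+> rank_witness X L B)) \<in> ordIso"

end

theory Submission
  imports Defs
begin

text \<open>
  Lines and planes have rank 2 and 3, so two disjoint lines fail to be skew exactly when they lie
  in a plane spanned by three points; there one is a parallel to the other through any of its
  points. This links (1)--(3), and the projective axiom is the special case of the triangle
  \<open>w x y\<close>, whose lines \<open>v p\<close> and \<open>w x\<close> lie in the plane \<open>w x y\<close>.
  Two applications of the projective axiom show that the cone \<open>\<Union>a\<in>A. line a b\<close> over a flat \<open>A\<close>
  is again flat, which is strong regularity. Strong regularity gives the exchange property of the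
  flat hull, so flats form a matroid: independent sets obey the Steinitz bound and flats of finite
  rank have finite bases. The modular law \<open>span (A \<union> C) \<inter> B = C\<close> for flats
  \<open>A \<inter> B \<subseteq> C \<subseteq> B\<close> lets a basis of \<open>A \<inter> B\<close>, extended to bases of \<open>A\<close> and of \<open>B\<close>,
  be merged into a basis of \<open>A \<union> B\<close>, which is modularity for finite ranks; for infinite ranks
  both cardinal sums equal the rank of \<open>A \<union> B\<close>. Finally, in a modular liner two disjoint lines
  have \<open>0 + rank (A \<union> B) = 2 + 2\<close>.
\<close>

locale liner_space =
  fixes X :: "'a set" and L :: "'a set set"
  assumes liner: "liner X L"
begin

abbreviation line :: "'a \<Rightarrow> 'a \<Rightarrow> 'a set" where
  "line \<equiv> line_through L"

abbreviation span :: "'a set \<Rightarrow> 'a set" where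
  "span \<equiv> flat_hull X L"

lemma line_subset_points: "\<Lambda> \<in> L \<Longrightarrow> \<Lambda> \<subseteq> X"
  using liner unfolding liner_def by blast

lemma line_has_two_points: "\<Lambda> \<in> L \<Longrightarrow> \<exists>x y. x \<noteq> y \<and> x \<in> \<Lambda> \<and> y \<in> \<Lambda>"
  using liner unfolding liner_def by blast

lemma line_through_unique:
  assumes "x \<in> X" "y \<in> X" "x \<noteq> y"
  shows "\<exists>!\<Lambda>. \<Lambda> \<in> L \<and> x \<in> \<Lambda> \<and> y \<in> \<Lambda>"
  using liner assms unfolding liner_def by (elim conjE) simp

lemma line_through_in_L:
  assumes "x \<in> X" "y \<in> X" "x \<noteq> y"
  shows "line x y \<in> L" "x \<in> line x y" "y \<in> line x y"
  using theI'[OF line_through_unique[OF assms]] assms(3) by (simp_all add: line_through_def)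

lemma line_eqI:
  assumes "\<Lambda> \<in> L" "x \<in> \<Lambda>" "y \<in> \<Lambda>" "x \<noteq> y"
  shows "line x y = \<Lambda>"
proof -
  have "x \<in> X" "y \<in> X" using assms line_subset_points by auto
  from the1_equality[OF line_through_unique[OF this assms(4)]] assms show ?thesis
    by (simp add: line_through_def)
qed

lemma line_same [simp]: "line x x = {x}"
  by (simp add: line_through_def)

lemma line_commute: "line x y = line y x"
proof -
  have "(\<lambda>\<Lambda>. \<Lambda> \<in> L \<and> x \<in> \<Lambda> \<and> y \<in> \<Lambda>) = (\<lambda>\<Lambda>. \<Lambda> \<in> L \<and> y \<in> \<Lambda> \<and> x \<in> \<Lambda>)"
    by auto
  then show ?thesis by (simp add: line_through_def)
qed

lemma left_in_line: "x \<in> X \<Longrightarrow> y \<in> X \<Longrightarrow> x \<in> line x y"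
  using line_through_in_L by (cases "x = y") auto

lemma right_in_line: "x \<in> X \<Longrightarrow> y \<in> X \<Longrightarrow> y \<in> line x y"
  using left_in_line line_commute by metis

lemma line_subset: "x \<in> X \<Longrightarrow> y \<in> X \<Longrightarrow> line x y \<subseteq> X"
  using line_through_in_L line_subset_points by (cases "x = y") (auto simp: line_through_def)

lemma line_eq_line:
  assumes "x \<in> X" "y \<in> X" "u \<in> line x y" "v \<in> line x y" "u \<noteq> v"
  shows "line u v = line x y"
proof -
  have "x \<noteq> y" using assms(3-5) by auto
  then show ?thesis using line_eqI line_through_in_L assms by blast
qed

lemma flat_line: "\<Lambda> \<in> L \<Longrightarrow> flat X L \<Lambda>"
  unfolding flat_def using line_subset_points line_eqI by auto

lemma flat_line_through: "x \<in> X \<Longrightarrow> y \<in> X \<Longrightarrow> flat X L (line x y)"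
  using flat_line line_through_in_L by (cases "x = y") (auto simp: flat_def)

lemma flat_line_subset: "flat X L F \<Longrightarrow> x \<in> F \<Longrightarrow> y \<in> F \<Longrightarrow> line x y \<subseteq> F"
  unfolding flat_def by (cases "x = y") auto

lemma flat_subset_points: "flat X L F \<Longrightarrow> F \<subseteq> X"
  unfolding flat_def by auto

lemma flat_points: "flat X L X"
  unfolding flat_def using line_subset by auto

lemma span_superset: "A \<subseteq> span A"
  unfolding flat_hull_def by blast

lemma span_least: "flat X L F \<Longrightarrow> A \<subseteq> F \<Longrightarrow> span A \<subseteq> F"
  unfolding flat_hull_def by blast

lemma span_subset_points: "A \<subseteq> X \<Longrightarrow> span A \<subseteq> X"
  using span_least flat_points by blast

lemma flat_span: "A \<subseteq> X \<Longrightarrow> flat X L (span A)"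
  using span_subset_points unfolding flat_def flat_hull_def by blast

lemma line_subset_span: "A \<subseteq> X \<Longrightarrow> x \<in> span A \<Longrightarrow> y \<in> span A \<Longrightarrow> line x y \<subseteq> span A"
  using flat_line_subset flat_span by blast

lemma span_mono: "A \<subseteq> B \<Longrightarrow> B \<subseteq> X \<Longrightarrow> span A \<subseteq> span B"
  using span_least flat_span span_superset by (meson order_trans)

lemma span_flat_eq: "flat X L F \<Longrightarrow> span F = F"
  using span_least span_superset by blast

lemma span_Un_span:
  assumes "A \<subseteq> X" "B \<subseteq> X"
  shows "span (span A \<union> B) = span (A \<union> B)"
proof
  show "span (span A \<union> B) \<subseteq> span (A \<union> B)"
    using assms span_superset[of "A \<union> B"] span_mono[of A "A \<union> B"]
    by (intro span_least flat_span) auto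
  show "span (A \<union> B) \<subseteq> span (span A \<union> B)"
    using assms span_superset span_subset_points by (intro span_mono) auto
qed

lemma span_empty [simp]: "span {} = {}"
  using span_flat_eq by (simp add: flat_def)

lemma span_singleton: "x \<in> X \<Longrightarrow> span {x} = {x}"
  using span_flat_eq by (simp add: flat_def)

lemma span_pair:
  assumes "x \<in> X" "y \<in> X"
  shows "span {x, y} = line x y"
proof
  show "span {x, y} \<subseteq> line x y"
    using left_in_line right_in_line assms by (intro span_least flat_line_through) auto
  show "line x y \<subseteq> span {x, y}"
    using line_subset_span[of "{x, y}" x y] span_superset assms by blast
qed

section \<open>Rank\<close>

lemma generatorsI: "B \<subseteq> X \<Longrightarrow> S \<subseteq> span B \<Longrightarrow> B \<in> generators X L S"
  unfolding generators_def by blast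

lemma generatorsD: "B \<in> generators X L S \<Longrightarrow> B \<subseteq> X \<and> S \<subseteq> span B"
  unfolding generators_def by blast

lemma rank_witness:
  assumes "S \<subseteq> X"
  shows "rank_witness X L S \<in> generators X L S"
    and "C \<in> generators X L S \<Longrightarrow> (card_of (rank_witness X L S), card_of C) \<in> ordLeq"
proof -
  have "\<exists>B. B \<in> generators X L S \<and> (\<forall>C\<in>generators X L S. (card_of B, card_of C) \<in> ordLeq)"
  proof -
    have "card_of S \<in> card_of ` generators X L S"
      using assms span_superset by (blast intro: generatorsI)
    then obtain \<kappa> where "\<kappa> \<in> card_of ` generators X L S"
      and least: "\<And>\<mu>. (\<mu>, \<kappa>) \<in> ordLess \<Longrightarrow> \<mu> \<notin> card_of ` generators X L S"
      using wf_ordLess unfolding wf_eq_minimal by metis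
    then obtain B where B: "B \<in> generators X L S" "\<kappa> = card_of B" by blast
    have "(card_of B, card_of C) \<in> ordLeq" if "C \<in> generators X L S" for C
      using least[of "card_of C"] that B(2) not_ordLess_iff_ordLeq[OF card_of_Well_order card_of_Well_order]
      by blast
    with B show ?thesis by blast
  qed
  from someI_ex[OF this] show "rank_witness X L S \<in> generators X L S"
    and "C \<in> generators X L S \<Longrightarrow> (card_of (rank_witness X L S), card_of C) \<in> ordLeq"
    unfolding rank_witness_def by blast+
qed

lemma rank_witness_card_le:
  assumes "S \<subseteq> X" "C \<in> generators X L S" "finite C"
  shows "finite (rank_witness X L S)" "card (rank_witness X L S) \<le> card C"
proof -
  have le: "(card_of (rank_witness X L S), card_of C) \<in> ordLeq"
    using rank_witness(2)[OF assms(1,2)] .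
  then show "finite (rank_witness X L S)"
    using card_of_ordLeq_finite assms(3) by blast
  moreover obtain f where "inj_on f (rank_witness X L S)" "f ` rank_witness X L S \<subseteq> C"
    using le card_of_ordLeq by metis
  ultimately show "card (rank_witness X L S) \<le> card C"
    using card_inj_on_le assms(3) by blast
qed

lemma rank_is_iff:
  assumes "S \<subseteq> X"
  shows "rank_is X L S n \<longleftrightarrow> finite (rank_witness X L S) \<and> card (rank_witness X L S) = n"
proof
  assume "rank_is X L S n"
  then obtain B where "B \<in> generators X L S" "finite B" "card B = n"
    and "\<And>C. C \<in> generators X L S \<Longrightarrow> finite C \<Longrightarrow> n \<le> card C"
    unfolding rank_is_def by blast
  with rank_witness(1)[OF assms] rank_witness_card_le[OF assms]
  show "finite (rank_witness X L S) \<and> card (rank_witness X L S) = n"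
    by (metis le_antisym)
next
  assume "finite (rank_witness X L S) \<and> card (rank_witness X L S) = n"
  with rank_witness(1)[OF assms] rank_witness_card_le(2)[OF assms] show "rank_is X L S n"
    unfolding rank_is_def by blast
qed

lemma rank_witness_empty: "rank_witness X L {} = {}"
  using rank_witness_card_le[of "{}" "{}"] generatorsI[of "{}" "{}"] by simp

lemma rank_witness_le_generator:
  assumes "S \<subseteq> span B" "B \<subseteq> X"
  shows "(card_of (rank_witness X L S), card_of B) \<in> ordLeq"
  using rank_witness(2) assms span_subset_points generatorsI by (meson subset_trans)

lemma rank_witness_mono:
  assumes "S \<subseteq> T" "T \<subseteq> X"
  shows "(card_of (rank_witness X L S), card_of (rank_witness X L T)) \<in> ordLeq"
  using generatorsD[OF rank_witness(1)[OF assms(2)]] assms(1)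
  by (intro rank_witness_le_generator) auto

lemma span_card_le_2_line:
  assumes "finite H" "H \<subseteq> X" "card H \<le> 2" "\<Lambda> \<in> L" "\<Lambda> \<subseteq> span H"
  shows "card H = 2" "span H = \<Lambda>"
proof -
  obtain a b where ab: "a \<noteq> b" "a \<in> \<Lambda>" "b \<in> \<Lambda>"
    using line_has_two_points[OF assms(4)] by blast
  have "card H \<noteq> 0"
    using assms(1,5) ab by auto
  moreover have "card H \<noteq> 1"
  proof
    assume "card H = 1"
    then obtain p where "H = {p}" by (rule card_1_singletonE)
    then show False using assms(2,5) ab span_singleton by auto
  qed
  ultimately show "card H = 2" using assms(3) by linarith
  then obtain p q where pq: "H = {p, q}" "p \<noteq> q" by (meson card_2_iff)
  with assms(2) have "span H = line p q" "line p q \<in> L"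
    using span_pair line_through_in_L by auto
  then show "span H = \<Lambda>"
    using line_eqI[of "line p q" a b] line_eqI[OF assms(4) ab(2,3,1)] ab assms(5) by auto
qed

lemma rank_line: "\<Lambda> \<in> L \<Longrightarrow> rank_is X L \<Lambda> 2"
proof -
  assume "\<Lambda> \<in> L"
  then obtain a b where ab: "a \<noteq> b" "a \<in> \<Lambda>" "b \<in> \<Lambda>" "\<Lambda> \<subseteq> X"
    using line_has_two_points line_subset_points by blast
  then have "span {a, b} = \<Lambda>"
    using span_pair[of a b] line_eqI[OF \<open>\<Lambda> \<in> L\<close> ab(2,3,1)] ab(2-4) by auto
  with ab have "{a, b} \<in> generators X L \<Lambda>"
    by (intro generatorsI) auto
  moreover have "2 \<le> card H" if "H \<in> generators X L \<Lambda>" "finite H" for H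
  proof (rule ccontr)
    assume "\<not> 2 \<le> card H"
    then have "card H \<le> 2" by simp
    from span_card_le_2_line(1)[OF that(2) _ this \<open>\<Lambda> \<in> L\<close>] generatorsD[OF that(1)]
    have "card H = 2" by blast
    with \<open>\<not> 2 \<le> card H\<close> show False by simp
  qed
  moreover have "card {a, b} = 2" using ab(1) by simp
  ultimately show ?thesis
    unfolding rank_is_def by (intro conjI bexI[of _ "{a, b}"]) auto
qed

lemma generator_disjoint_lines:
  assumes "A \<in> L" "B \<in> L" "A \<inter> B = {}"
  obtains G where "G \<in> generators X L (A \<union> B)" "finite G" "card G = 4"
proof -
  obtain a a' where a: "a \<noteq> a'" "a \<in> A" "a' \<in> A"
    using line_has_two_points[OF assms(1)] by blast
  obtain b b' where b: "b \<noteq> b'" "b \<in> B" "b' \<in> B"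
    using line_has_two_points[OF assms(2)] by blast
  let ?G = "{a, a', b, b'}"
  have GX: "?G \<subseteq> X" using a b line_subset_points assms by blast
  have "line a a' \<subseteq> span ?G" "line b b' \<subseteq> span ?G"
    using line_subset_span[OF GX] span_superset[of ?G] by auto
  moreover have "line a a' = A" "line b b' = B"
    using line_eqI a b assms(1,2) by auto
  ultimately have "?G \<in> generators X L (A \<union> B)"
    using GX by (intro generatorsI) auto
  moreover have "a \<noteq> b" "a \<noteq> b'" "a' \<noteq> b" "a' \<noteq> b'"
    using a b assms(3) by auto
  then have "card ?G = 4"
    using a(1) b(1) by auto
  ultimately show thesis using that by blast
qed

lemma plane_span_card_3:
  assumes "finite H" "H \<subseteq> X" "card H = 3"
    and "A \<in> L" "B \<in> L" "A \<noteq> B" "A \<union> B \<subseteq> span H"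
  shows "plane X L (span H)"
  unfolding plane_def rank_is_def
proof (intro conjI ballI impI)
  show "flat X L (span H)" using flat_span[OF assms(2)] .
  show "\<exists>G\<in>generators X L (span H). finite G \<and> card G = 3"
    using assms(1-3) generatorsI by blast
  show "3 \<le> card G" if "G \<in> generators X L (span H)" "finite G" for G
  proof (rule ccontr)
    assume "\<not> 3 \<le> card G"
    then have "card G \<le> 2" by simp
    have GX: "G \<subseteq> X" and "span H \<subseteq> span G"
      using generatorsD[OF that(1)] by auto
    with assms(7) have "A \<union> B \<subseteq> span G" by blast
    then have "span G = A" "span G = B"
      using span_card_le_2_line(2)[OF that(2) GX \<open>card G \<le> 2\<close>] assms(4,5) by auto
    with assms(6) show False by simp
  qed
qed

lemma skew_lines_iff:
  assumes "A \<in> L" "B \<in> L" "A \<inter> B = {}"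
  shows "skew X L A B \<longleftrightarrow> (\<forall>H. H \<subseteq> X \<longrightarrow> finite H \<longrightarrow> A \<union> B \<subseteq> span H \<longrightarrow> 3 < card H)"
proof -
  obtain G where "G \<in> generators X L (A \<union> B)" "finite G" "card G = 4"
    using generator_disjoint_lines[OF assms] .
  then have "skew X L A B \<longleftrightarrow> (\<forall>H\<in>generators X L (A \<union> B). finite H \<longrightarrow> 4 \<le> card H)"
    unfolding skew_def rank_is_def by blast
  also have "\<dots> \<longleftrightarrow> (\<forall>H. H \<subseteq> X \<longrightarrow> finite H \<longrightarrow> A \<union> B \<subseteq> span H \<longrightarrow> 3 < card H)"
    unfolding generators_def by auto
  finally show ?thesis .
qed

section \<open>Parallels and skew lines\<close>

lemma parallel_0_imp_skew:
  assumes "parallel 0 X L" "A \<in> L" "B \<in> L" "A \<inter> B = {}"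
  shows "skew X L A B"
  unfolding skew_lines_iff[OF assms(2-4)]
proof (intro allI impI)
  fix H assume H: "H \<subseteq> X" "finite H" "A \<union> B \<subseteq> span H"
  have "A \<noteq> B" using assms(3,4) line_has_two_points by blast
  show "3 < card H"
  proof (rule ccontr)
    assume "\<not> 3 < card H"
    moreover have "\<not> card H \<le> 2"
    proof
      assume "card H \<le> 2"
      from span_card_le_2_line(2)[OF H(2,1) this assms(2)] span_card_le_2_line(2)[OF H(2,1) this assms(3)]
      show False using H(3) \<open>A \<noteq> B\<close> by blast
    qed
    ultimately have "card H = 3" by simp
    then have plane: "plane X L (span H)"
      using plane_span_card_3[OF H(2,1) _ assms(2,3) \<open>A \<noteq> B\<close> H(3)] by blast
    obtain b where "b \<in> B" using line_has_two_points[OF assms(3)] by blast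
    with assms(4) H(3) have "b \<in> span H - A" by blast
    with assms(1,2) plane H(3) have "finite (parallels_in X L (span H) A b)"
      and "card (parallels_in X L (span H) A b) = 0"
      unfolding parallel_def by blast+
    then have "parallels_in X L (span H) A b = {}" by simp
    moreover have "B \<in> parallels_in X L (span H) A b"
      unfolding parallels_in_def using assms(3,4) H(3) \<open>b \<in> B\<close> by blast
    ultimately show False by simp
  qed
qed

lemma skew_imp_parallel_0:
  assumes skew: "\<forall>A\<in>L. \<forall>B\<in>L. A \<inter> B = {} \<longrightarrow> skew X L A B"
  shows "parallel 0 X L"
  unfolding parallel_def
proof (intro allI impI)
  fix P M x assume PM: "plane X L P \<and> M \<in> L \<and> M \<subseteq> P \<and> x \<in> P - M"
  have "parallels_in X L P M x = {}"
  proof (rule ccontr)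
    assume "parallels_in X L P M x \<noteq> {}"
    then obtain \<Lambda> where \<Lambda>: "\<Lambda> \<in> L" "\<Lambda> \<subseteq> P - M"
      unfolding parallels_in_def by blast
    obtain G where G: "G \<in> generators X L P" "finite G" "card G = 3"
      using PM unfolding plane_def rank_is_def by blast
    have "\<Lambda> \<inter> M = {}" using \<Lambda>(2) by blast
    then have "skew X L \<Lambda> M" using skew \<Lambda>(1) PM by blast
    moreover have "\<Lambda> \<union> M \<subseteq> span G" using \<Lambda>(2) PM generatorsD[OF G(1)] by blast
    ultimately have "3 < card G"
      using skew_lines_iff[OF \<Lambda>(1) _ \<open>\<Lambda> \<inter> M = {}\<close>] PM G(2) generatorsD[OF G(1)] by blast
    with G(3) show False by simp
  qed
  then show "finite (parallels_in X L P M x) \<and> card (parallels_in X L P M x) = 0"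
    by simp
qed

lemma skew_imp_projective:
  assumes skew: "\<forall>A\<in>L. \<forall>B\<in>L. A \<inter> B = {} \<longrightarrow> skew X L A B"
  shows "projective X L"
  unfolding projective_def
proof (intro ballI)
  fix w x y p v
  assume w: "w \<in> X" and x: "x \<in> X" and y: "y \<in> X" and p: "p \<in> line x y"
    and v: "v \<in> line w y - {p}"
  have "p \<in> X" using p line_subset[OF x y] by blast
  have "v \<in> X" "v \<noteq> p" using v line_subset[OF w y] by auto
  show "line v p \<inter> line w x \<noteq> {}"
  proof (cases "w = x")
    case True
    show ?thesis
    proof (cases "w = y")
      case True
      then have "line w y = {w}" "line x y = {w}" using \<open>w = x\<close> by simp_all
      with p v have False by simp
      then show ?thesis ..
    next
      case False
      have "p \<in> line w y" using p \<open>w = x\<close> by simp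
      with v have "line v p = line w y"
        using line_eq_line[OF w y _ _ \<open>v \<noteq> p\<close>] by blast
      then show ?thesis using left_in_line[OF w y] \<open>w = x\<close> by auto
    qed
  next
    case False
    let ?G = "{w, x, y}"
    have GX: "?G \<subseteq> X" using w x y by simp
    have "w \<in> span ?G" "x \<in> span ?G" "y \<in> span ?G"
      using span_superset[of ?G] by auto
    then have "line x y \<subseteq> span ?G" "line w y \<subseteq> span ?G" "line w x \<subseteq> span ?G"
      using line_subset_span[OF GX] by simp_all
    then have "line v p \<union> line w x \<subseteq> span ?G"
      using p v line_subset_span[OF GX, of v p] by blast
    moreover have "card ?G \<le> 3" by (simp add: card_insert_le_m1)
    moreover have "line v p \<in> L" "line w x \<in> L"
      using line_through_in_L \<open>v \<in> X\<close> \<open>p \<in> X\<close> \<open>v \<noteq> p\<close> w x False by auto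
    ultimately show ?thesis
      using skew skew_lines_iff GX by (meson finite.emptyI finite_insert not_less)
  qed
qed

lemma modular_imp_skew:
  assumes "modular X L" "A \<in> L" "B \<in> L" "A \<inter> B = {}"
  shows "skew X L A B"
proof -
  have AX: "A \<subseteq> X" and BX: "B \<subseteq> X" and ABX: "A \<union> B \<subseteq> X"
    using assms(2,3) line_subset_points by auto
  obtain f where "bij_betw f (rank_witness X L (A \<inter> B) <+> rank_witness X L (A \<union> B))
      (rank_witness X L A <+> rank_witness X L B)"
    using assms(1) flat_line assms(2,3) card_of_ordIso unfolding modular_def by blast
  from bij_betw_same_card[OF this] have card_eq:
    "card (rank_witness X L (A \<inter> B) <+> rank_witness X L (A \<union> B))
      = card (rank_witness X L A <+> rank_witness X L B)" .
  have "finite (rank_witness X L A)" "card (rank_witness X L A) = 2"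
    "finite (rank_witness X L B)" "card (rank_witness X L B) = 2"
    using rank_line[OF assms(2)] rank_line[OF assms(3)] rank_is_iff[OF AX] rank_is_iff[OF BX]
    by simp_all
  moreover obtain G where "G \<in> generators X L (A \<union> B)" "finite G"
    using generator_disjoint_lines[OF assms(2-4)] by blast
  then have "finite (rank_witness X L (A \<union> B))"
    using rank_witness_card_le(1)[OF ABX] by blast
  ultimately have "card (rank_witness X L (A \<union> B)) = 4"
    using card_eq rank_witness_empty assms(4) by (simp add: card_Plus)
  with \<open>finite (rank_witness X L (A \<union> B))\<close> show ?thesis
    unfolding skew_def rank_is_iff[OF ABX] by blast
qed

section \<open>Projective liners\<close>

definition cone :: "'a set \<Rightarrow> 'a \<Rightarrow> 'a set" where
  "cone A b = (\<Union>a\<in>A. line a b)"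

lemma cone_subset_points: "A \<subseteq> X \<Longrightarrow> b \<in> X \<Longrightarrow> cone A b \<subseteq> X"
  unfolding cone_def using line_subset by blast

lemma subset_cone: "A \<subseteq> X \<Longrightarrow> b \<in> X \<Longrightarrow> A \<subseteq> cone A b"
  unfolding cone_def using left_in_line by blast

lemma apex_in_cone: "A \<subseteq> X \<Longrightarrow> A \<noteq> {} \<Longrightarrow> b \<in> X \<Longrightarrow> b \<in> cone A b"
  unfolding cone_def using right_in_line by blast

lemma cone_subset_span: "A \<subseteq> X \<Longrightarrow> b \<in> X \<Longrightarrow> cone A b \<subseteq> span (insert b A)"
  unfolding cone_def using line_subset_span[of "insert b A"] span_superset[of "insert b A"] by blast

lemma projective_line_subset_cone:
  assumes proj: "projective X L" and A: "flat X L A" and b: "b \<in> X" "b \<notin> A"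
    and q: "q \<in> A" and a: "a \<in> A" "u \<in> line a b" and u: "u \<notin> A" "u \<noteq> b"
  shows "line q u \<subseteq> cone A b"
proof
  have AX: "A \<subseteq> X" using A flat_subset_points by blast
  have aX: "a \<in> X" and qX: "q \<in> X" and uX: "u \<in> X"
    using a q AX line_subset[OF _ b(1)] by auto
  have "u \<noteq> a" using a(1) u(1) by blast
  then have "line a u = line a b"
    using line_eq_line[OF aX b(1) left_in_line[OF aX b(1)] a(2)] by simp
  then have b_in: "b \<in> line a u" using right_in_line[OF aX b(1)] by simp
  fix z assume z: "z \<in> line q u"
  have zX: "z \<in> X" using z line_subset[OF qX uX] by blast
  show "z \<in> cone A b"
  proof (cases "z = b")
    case True
    then show ?thesis using apex_in_cone[OF AX _ b(1)] a(1) by blast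
  next
    case False
    with b_in have "line z b \<inter> line q a \<noteq> {}"
      using proj qX aX uX z unfolding projective_def by blast
    then obtain r where r: "r \<in> line z b" "r \<in> line q a" by blast
    have "r \<in> A" using r(2) flat_line_subset[OF A q a(1)] by blast
    then have "line r b = line z b"
      using line_eq_line[OF zX b(1) r(1) right_in_line[OF zX b(1)]] b(2) by blast
    then show ?thesis
      using \<open>r \<in> A\<close> left_in_line[OF zX b(1)] unfolding cone_def by blast
  qed
qed

lemma line_subset_cone:
  assumes proj: "projective X L" and A: "flat X L A" and b: "b \<in> X" "b \<notin> A"
    and q: "q \<in> insert b A" and u: "u \<in> cone A b"
  shows "line q u \<subseteq> cone A b"
proof -
  have AX: "A \<subseteq> X" using A flat_subset_points by blast
  obtain a where a: "a \<in> A" "u \<in> line a b" using u unfolding cone_def by blast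
  have aX: "a \<in> X" using a(1) AX by blast
  consider "u \<in> A" | "u = b" | "u \<notin> A" "u \<noteq> b" by blast
  then show ?thesis
  proof cases
    case 1
    show ?thesis
    proof (cases "q = b")
      case True
      then show ?thesis using 1 line_commute unfolding cone_def by blast
    next
      case False
      then have "line q u \<subseteq> A" using 1 q flat_line_subset[OF A] by blast
      then show ?thesis using subset_cone[OF AX b(1)] by blast
    qed
  next
    case 2
    then show ?thesis
      using q line_commute[of q b] a(1) right_in_line[OF aX b(1)] unfolding cone_def by auto
  next
    case 3
    show ?thesis
    proof (cases "q = b")
      case True
      have "line b u = line a b"
        using line_eq_line[OF aX b(1) right_in_line[OF aX b(1)] a(2)] 3 by (simp add: eq_commute)
      then show ?thesis using True a(1) unfolding cone_def by blast
    next
      case False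
      with q have "q \<in> A" by blast
      with projective_line_subset_cone[OF proj A b _ a 3] show ?thesis by blast
    qed
  qed
qed

lemma flat_cone:
  assumes proj: "projective X L" and A: "flat X L A" and b: "b \<in> X" "b \<notin> A"
  shows "flat X L (cone A b)"
  unfolding flat_def
proof (intro conjI ballI impI)
  have AX: "A \<subseteq> X" using A flat_subset_points by blast
  show "cone A b \<subseteq> X" using cone_subset_points[OF AX b(1)] .
  fix u w assume u: "u \<in> cone A b" and w: "w \<in> cone A b" and "u \<noteq> w"
  show "line u w \<subseteq> cone A b"
  proof (cases "u \<in> insert b A \<or> w \<in> insert b A")
    case True
    then show ?thesis
      using line_subset_cone[OF proj A b] u w line_commute[of u w] by metis
  next
    case False
    obtain a1 where a1: "a1 \<in> A" "u \<in> line a1 b" using u unfolding cone_def by blast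
    obtain a2 where a2: "a2 \<in> A" "w \<in> line a2 b" using w unfolding cone_def by blast
    have aX: "a1 \<in> X" "a2 \<in> X" and uX: "u \<in> X" and wX: "w \<in> X"
      using a1 a2 AX line_subset[OF _ b(1)] by auto
    have "line w u \<inter> line a2 a1 \<noteq> {}"
      using proj a1 a2 \<open>u \<noteq> w\<close> aX b(1) unfolding projective_def by blast
    then obtain q where q: "q \<in> line u w" "q \<in> line a2 a1"
      using line_commute[of w u] by blast
    have "q \<in> A" using q(2) flat_line_subset[OF A a2(1) a1(1)] by blast
    with False have "q \<noteq> u" by blast
    then have "line q u = line u w"
      using line_eq_line[OF uX wX q(1) left_in_line[OF uX wX]] by blast
    then show ?thesis
      using line_subset_cone[OF proj A b _ u] \<open>q \<in> A\<close> by auto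
  qed
qed

lemma projective_imp_strongly_regular:
  assumes proj: "projective X L"
  shows "strongly_regular X L"
  unfolding strongly_regular_def
proof (intro allI impI)
  fix A b assume Ab: "flat X L A \<and> A \<noteq> {} \<and> b \<in> X - A"
  then have AX: "A \<subseteq> X" using flat_subset_points by blast
  have "span (insert b A) \<subseteq> cone A b"
    using Ab flat_cone[OF proj] subset_cone[OF AX] apex_in_cone[OF AX]
    by (intro span_least) auto
  with cone_subset_span[OF AX] Ab show "span (A \<union> {b}) = (\<Union>a\<in>A. line a b)"
    unfolding cone_def by auto
qed

section \<open>Strongly regular liners\<close>

lemma strongly_regular_span_insert:
  assumes sr: "strongly_regular X L" and F: "flat X L F" "F \<noteq> {}" and b: "b \<in> X"
  shows "span (insert b F) = cone F b"
proof (cases "b \<in> F")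
  case True
  have FX: "F \<subseteq> X" using F(1) flat_subset_points by blast
  have "span (insert b F) = F"
    using span_flat_eq[OF F(1)] True by (simp add: insert_absorb)
  moreover have "cone F b \<subseteq> F"
    unfolding cone_def using flat_line_subset[OF F(1) _ True] by blast
  ultimately show ?thesis using subset_cone[OF FX b] by blast
next
  case False
  with sr F b show ?thesis
    unfolding strongly_regular_def cone_def by simp
qed

lemma span_exchange:
  assumes sr: "strongly_regular X L" and AX: "A \<subseteq> X" and b: "b \<in> X" and c: "c \<in> X"
    and b_in: "b \<in> span (insert c A)" and b_notin: "b \<notin> span A"
  shows "c \<in> span (insert b A)"
proof (cases "A = {}")
  case True
  then show ?thesis using b_in span_singleton[OF c] span_superset by auto
next
  case False
  have "span (insert c A) = span (insert c (span A))"
    using span_Un_span[OF AX, of "{c}"] c by simp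
  also have "\<dots> = cone (span A) c"
    using strongly_regular_span_insert[OF sr flat_span[OF AX] _ c] False span_superset[of A] by blast
  finally obtain f where f: "f \<in> span A" "b \<in> line f c"
    using b_in unfolding cone_def by blast
  have fX: "f \<in> X" using f(1) span_subset_points[OF AX] by blast
  have bAX: "insert b A \<subseteq> X" using AX b by blast
  have "f \<in> span (insert b A)" "b \<in> span (insert b A)"
    using f(1) span_mono[OF _ bAX, of A] span_superset[of "insert b A"] by auto
  then have "line f b \<subseteq> span (insert b A)"
    using line_subset_span[OF bAX] by blast
  moreover have "c \<in> line f b"
  proof (cases "b = c")
    case True
    then show ?thesis using right_in_line[OF fX b] by simp
  next
    case False
    have "b \<noteq> f" using f(1) b_notin by blast
    then have "line f b = line f c"
      using line_eq_line[OF fX c left_in_line[OF fX c] f(2)] by simp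
    then show ?thesis using right_in_line[OF fX c] by simp
  qed
  ultimately show ?thesis by blast
qed

definition indep :: "'a set \<Rightarrow> bool" where
  "indep I \<longleftrightarrow> I \<subseteq> X \<and> (\<forall>i\<in>I. i \<notin> span (I - {i}))"

definition basis :: "'a set \<Rightarrow> 'a set \<Rightarrow> bool" where
  "basis S I \<longleftrightarrow> indep I \<and> I \<subseteq> S \<and> S \<subseteq> span I"

lemma indep_subset_points: "indep I \<Longrightarrow> I \<subseteq> X"
  unfolding indep_def by blast

lemma indep_empty: "indep {}"
  unfolding indep_def by simp

lemma indep_subset:
  assumes "indep I" "J \<subseteq> I"
  shows "indep J"
  unfolding indep_def
proof (intro conjI ballI)
  show "J \<subseteq> X" using assms indep_subset_points by blast
  fix j assume "j \<in> J"
  have "span (J - {j}) \<subseteq> span (I - {j})"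
    using assms indep_subset_points by (intro span_mono) auto
  with assms \<open>j \<in> J\<close> show "j \<notin> span (J - {j})"
    unfolding indep_def by blast
qed

lemma indep_insert:
  assumes sr: "strongly_regular X L" and J: "indep J" and g: "g \<in> X" "g \<notin> span J"
  shows "indep (insert g J)"
  unfolding indep_def
proof (intro conjI ballI)
  have JX: "J \<subseteq> X" using J indep_subset_points by blast
  show "insert g J \<subseteq> X" using JX g(1) by simp
  have "g \<notin> J" using g(2) span_superset[of J] by blast
  fix i assume i: "i \<in> insert g J"
  show "i \<notin> span (insert g J - {i})"
  proof (cases "i = g")
    case True
    with g(2) \<open>g \<notin> J\<close> show ?thesis by simp
  next
    case False
    with i have "i \<in> J" by blast
    have eq: "insert g J - {i} = insert g (J - {i})" using False by blast
    have "i \<notin> span (J - {i})" using J \<open>i \<in> J\<close> unfolding indep_def by blast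
    moreover have "insert i (J - {i}) = J" using \<open>i \<in> J\<close> by blast
    ultimately show ?thesis
      using span_exchange[OF sr _ _ g(1), of "J - {i}" i] JX \<open>i \<in> J\<close> g(2) eq by auto
  qed
qed

lemma indep_Un:
  assumes sr: "strongly_regular X L" and J: "indep J" and K: "finite K" "K \<subseteq> X"
    and new: "\<forall>k\<in>K. k \<notin> span (J \<union> (K - {k}))"
  shows "indep (J \<union> K)"
  using K new
proof (induction K rule: finite_induct)
  case empty
  then show ?case using J by simp
next
  case (insert k K)
  have JX: "J \<union> insert k K \<subseteq> X" using J insert.prems(1) indep_subset_points by blast
  have "\<forall>k'\<in>K. k' \<notin> span (J \<union> (K - {k'}))"
  proof
    fix k' assume "k' \<in> K"
    have "span (J \<union> (K - {k'})) \<subseteq> span (J \<union> (insert k K - {k'}))"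
      using JX by (intro span_mono) auto
    with insert.prems(2) \<open>k' \<in> K\<close> show "k' \<notin> span (J \<union> (K - {k'}))" by blast
  qed
  with insert.IH insert.prems(1) have "indep (J \<union> K)" by blast
  moreover have "k \<notin> span (J \<union> K)"
    using insert.prems(2) insert.hyps(2) by (simp add: insert_Diff_if)
  ultimately show ?case
    using indep_insert[OF sr, of "J \<union> K" k] insert.prems(1) by simp
qed

lemma card_indep_le:
  assumes sr: "strongly_regular X L" and G: "finite G" "G \<subseteq> X"
  shows "finite I \<Longrightarrow> indep I \<Longrightarrow> I \<subseteq> span G \<Longrightarrow> card I \<le> card G"
proof (induction "card (I - G)" arbitrary: I rule: less_induct)
  \<comment> \<open>Steinitz exchange: trade a point of \<open>I - G\<close> for a point of \<open>G\<close> outside the span of the rest\<close>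
  case less
  show ?case
  proof (cases "I \<subseteq> G")
    case True
    then show ?thesis using card_mono G(1) by blast
  next
    case False
    then obtain i where i: "i \<in> I" "i \<notin> G" by blast
    have IX: "I \<subseteq> X" using less.prems(2) indep_subset_points by blast
    have "\<exists>g\<in>G. g \<notin> span (I - {i})"
    proof (rule ccontr)
      assume "\<not> ?thesis"
      then have "span G \<subseteq> span (I - {i})"
        using IX by (intro span_least flat_span) auto
      with less.prems(2,3) i(1) show False unfolding indep_def by blast
    qed
    then obtain g where g: "g \<in> G" "g \<notin> span (I - {i})" by blast
    have "g \<notin> I - {i}" using g(2) span_superset[of "I - {i}"] by blast
    with i(2) g(1) have "g \<notin> I" by blast
    let ?I' = "insert g (I - {i})"
    have "g \<in> X" using g(1) G(2) by blast
    from indep_insert[OF sr indep_subset[OF less.prems(2) Diff_subset] this g(2)]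
    have "indep ?I'" .
    moreover have "?I' \<subseteq> span G"
      using less.prems(3) g(1) span_superset[of G] by blast
    moreover have "card (?I' - G) < card (I - G)"
    proof -
      have "?I' - G = (I - G) - {i}" using g(1) by blast
      then show ?thesis using card_Diff1_less[of "I - G" i] i less.prems(1) by simp
    qed
    ultimately have "card ?I' \<le> card G"
      using less.hyps[of ?I'] less.prems(1) by simp
    moreover have "card ?I' = card I"
      using \<open>g \<notin> I\<close> i(1) less.prems(1) by (metis card_insert_disjoint card_Suc_Diff1 finite_Diff DiffD1)
    ultimately show ?thesis by simp
  qed
qed

lemma basis_extend:
  assumes sr: "strongly_regular X L" and G: "finite G" "G \<subseteq> X" and S: "S \<subseteq> span G"
    and I0: "finite I0" "indep I0" "I0 \<subseteq> S"
  obtains I where "basis S I" "finite I" "I0 \<subseteq> I"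
proof -
  let ?P = "\<lambda>I. indep I \<and> finite I \<and> I0 \<subseteq> I \<and> I \<subseteq> S"
  have "\<exists>I. ?P I \<and> (\<forall>I'. ?P I' \<longrightarrow> card I' \<le> card I)"
  proof (rule ex_has_greatest_nat[of ?P I0 card "Suc (card G)"])
    show "?P I0" using I0 by blast
    show "\<forall>I. ?P I \<longrightarrow> card I < Suc (card G)"
      using card_indep_le[OF sr G] S by (meson le_imp_less_Suc subset_trans)
  qed
  then obtain I where I: "?P I" and max: "\<And>I'. ?P I' \<Longrightarrow> card I' \<le> card I"
    by blast
  have "S \<subseteq> span I"
  proof
    fix s assume "s \<in> S"
    show "s \<in> span I"
    proof (rule ccontr)
      assume s: "s \<notin> span I"
      have "s \<in> X" using \<open>s \<in> S\<close> S span_subset_points[OF G(2)] by blast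
      then have "?P (insert s I)"
        using I indep_insert[OF sr _ _ s] \<open>s \<in> S\<close> by blast
      moreover have "s \<notin> I" using s span_superset by blast
      ultimately show False using max[of "insert s I"] I by simp
    qed
  qed
  with I that show thesis unfolding basis_def by blast
qed

lemma rank_witness_basis:
  assumes sr: "strongly_regular X L" and S: "S \<subseteq> X" and I: "basis S I" "finite I"
  shows "finite (rank_witness X L S)" "card (rank_witness X L S) = card I"
proof -
  have "I \<in> generators X L S"
    using I(1) indep_subset_points unfolding basis_def by (blast intro: generatorsI)
  from rank_witness_card_le[OF S this I(2)]
  have fin: "finite (rank_witness X L S)" and le: "card (rank_witness X L S) \<le> card I" .
  then show "finite (rank_witness X L S)" by simp
  have "rank_witness X L S \<subseteq> X" "S \<subseteq> span (rank_witness X L S)"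
    using generatorsD[OF rank_witness(1)[OF S]] by blast+
  then have "card I \<le> card (rank_witness X L S)"
    using card_indep_le[OF sr fin] I unfolding basis_def by blast
  with le show "card (rank_witness X L S) = card I" by simp
qed

lemma strongly_regular_span_insert2:
  assumes sr: "strongly_regular X L" and A: "flat X L A" "A \<noteq> {}" and c: "c \<in> X" "c' \<in> X"
  shows "span (insert c' (insert c A)) \<subseteq> (\<Union>a\<in>A. \<Union>d\<in>line c c'. line a d)"
proof
  have AX: "A \<subseteq> X" using A(1) flat_subset_points by blast
  let ?T = "span (insert c A)"
  have TX: "insert c A \<subseteq> X" using AX c by blast
  fix z assume "z \<in> span (insert c' (insert c A))"
  also have "span (insert c' (insert c A)) = span (insert c' ?T)"
    using span_Un_span[OF TX, of "{c'}"] c by simp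
  also have "\<dots> = cone ?T c'"
    using strongly_regular_span_insert[OF sr flat_span[OF TX] _ c(2)] span_superset[of "insert c A"]
    by blast
  finally obtain t where t: "t \<in> ?T" "z \<in> line t c'" unfolding cone_def by blast
  then obtain a where a: "a \<in> A" "t \<in> line a c"
    using strongly_regular_span_insert[OF sr A c(1)] unfolding cone_def by blast
  have aX: "a \<in> X" using a(1) AX by blast
  let ?S = "insert a (line c c')"
  have SX: "?S \<subseteq> X" using line_subset[OF c] aX by blast
  have "a \<in> span ?S" "c \<in> span ?S" "c' \<in> span ?S"
    using span_superset[of ?S] left_in_line[OF c] right_in_line[OF c] by auto
  then have "t \<in> span ?S"
    using line_subset_span[OF SX] a(2) by blast
  then have "z \<in> span ?S"
    using line_subset_span[OF SX] t(2) \<open>c' \<in> span ?S\<close> by blast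
  also have "span ?S = cone (line c c') a"
    using strongly_regular_span_insert[OF sr flat_line_through[OF c] _ aX] left_in_line[OF c] by blast
  finally obtain d where "d \<in> line c c'" "z \<in> line d a" unfolding cone_def by blast
  then show "z \<in> (\<Union>a\<in>A. \<Union>d\<in>line c c'. line a d)"
    using a(1) line_commute[of d a] by blast
qed

lemma strongly_regular_span_Un:
  assumes sr: "strongly_regular X L" and A: "flat X L A" "A \<noteq> {}" and C: "flat X L C" "C \<noteq> {}"
  shows "span (A \<union> C) = (\<Union>a\<in>A. \<Union>c\<in>C. line a c)"
proof
  let ?J = "\<Union>a\<in>A. \<Union>c\<in>C. line a c"
  have AX: "A \<subseteq> X" and CX: "C \<subseteq> X" using A(1) C(1) flat_subset_points by auto
  then have ACX: "A \<union> C \<subseteq> X" by blast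
  show "?J \<subseteq> span (A \<union> C)"
  proof (intro UN_least)
    fix a c assume "a \<in> A" "c \<in> C"
    then show "line a c \<subseteq> span (A \<union> C)"
      using line_subset_span[OF ACX, of a c] span_superset[of "A \<union> C"] by blast
  qed
  obtain a0 c0 where a0: "a0 \<in> A" and c0: "c0 \<in> C" using A(2) C(2) by blast
  have "a \<in> line a c0" if "a \<in> A" for a
    using left_in_line[of a c0] that c0 AX CX by blast
  moreover have "c \<in> line a0 c" if "c \<in> C" for c
    using right_in_line[of a0 c] that a0 AX CX by blast
  ultimately have "A \<union> C \<subseteq> ?J" using a0 c0 by blast
  moreover have "flat X L ?J"
    unfolding flat_def
  proof (intro conjI ballI impI)
    have "line a c \<subseteq> X" if "a \<in> A" "c \<in> C" for a c
      using line_subset that AX CX by blast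
    then show "?J \<subseteq> X" by blast
    fix u w assume "u \<in> ?J" "w \<in> ?J"
    then obtain a1 c1 a2 c2 where ac: "a1 \<in> A" "c1 \<in> C" "u \<in> line a1 c1"
      "a2 \<in> A" "c2 \<in> C" "w \<in> line a2 c2" by blast
    have cX: "c1 \<in> X" "c2 \<in> X" using ac CX by auto
    let ?S = "insert c2 (insert c1 A)"
    have SX: "?S \<subseteq> X" using AX cX by blast
    have "a1 \<in> span ?S" "c1 \<in> span ?S" "a2 \<in> span ?S" "c2 \<in> span ?S"
      using ac span_superset[of ?S] by auto
    then have "u \<in> span ?S" "w \<in> span ?S"
      using line_subset_span[OF SX] ac(3,6) by blast+
    then have "line u w \<subseteq> span ?S"
      using line_subset_span[OF SX] by blast
    also have "\<dots> \<subseteq> (\<Union>a\<in>A. \<Union>d\<in>line c1 c2. line a d)"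
      using strongly_regular_span_insert2[OF sr A cX] .
    also have "\<dots> \<subseteq> ?J"
      using flat_line_subset[OF C(1) ac(2,5)] by blast
    finally show "line u w \<subseteq> ?J" .
  qed
  ultimately show "span (A \<union> C) \<subseteq> ?J" by (intro span_least)
qed

lemma modular_law:
  assumes sr: "strongly_regular X L" and A: "flat X L A" and B: "flat X L B" and C: "flat X L C"
    and "C \<subseteq> B" "A \<inter> B \<subseteq> C"
  shows "span (A \<union> C) \<inter> B = C"
proof
  show "C \<subseteq> span (A \<union> C) \<inter> B" using span_superset[of "A \<union> C"] \<open>C \<subseteq> B\<close> by blast
  show "span (A \<union> C) \<inter> B \<subseteq> C"
  proof
    fix k assume k: "k \<in> span (A \<union> C) \<inter> B"
    consider "A = {}" | "C = {}" | "A \<noteq> {}" "C \<noteq> {}" by blast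
    then show "k \<in> C"
    proof cases
      case 1
      with k show ?thesis using span_flat_eq[OF C] by simp
    next
      case 2
      with k show ?thesis using span_flat_eq[OF A] \<open>A \<inter> B \<subseteq> C\<close> by auto
    next
      case 3
      then obtain a c where ac: "a \<in> A" "c \<in> C" "k \<in> line a c"
        using strongly_regular_span_Un[OF sr A _ C] k by blast
      have aX: "a \<in> X" and cX: "c \<in> X"
        using ac A C flat_subset_points by blast+
      show ?thesis
      proof (cases "k = c")
        case True
        with ac(2) show ?thesis by simp
      next
        case False
        have "line k c = line a c"
          using line_eq_line[OF aX cX ac(3) right_in_line[OF aX cX] False] .
        moreover have "line k c \<subseteq> B"
          using flat_line_subset[OF B] k ac(2) \<open>C \<subseteq> B\<close> by blast
        ultimately have "a \<in> C"
          using left_in_line[OF aX cX] ac(1) \<open>A \<inter> B \<subseteq> C\<close> by blast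
        then show ?thesis using flat_line_subset[OF C _ ac(2)] ac(3) by blast
      qed
    qed
  qed
qed

lemma basis_Un:
  assumes sr: "strongly_regular X L" and A: "flat X L A" and B: "flat X L B"
    and I: "basis (A \<inter> B) I" and J: "basis A J" "I \<subseteq> J" and K': "basis B K'" "I \<subseteq> K'" "finite K'"
  shows "basis (A \<union> B) (J \<union> (K' - I))" "J \<inter> (K' - I) = {}"
proof -
  define K where "K = K' - I"
  have AX: "A \<subseteq> X" using A flat_subset_points by blast
  have K'X: "K' \<subseteq> X" and JX: "J \<subseteq> X"
    using J(1) K'(1) indep_subset_points unfolding basis_def by auto
  have new: "\<forall>k\<in>K. k \<notin> span (J \<union> (K - {k}))"
  proof
    fix k assume "k \<in> K"
    \<comment> \<open>by the modular law, \<open>A\<close> and \<open>span (K' - {k})\<close> span nothing new inside \<open>B\<close>\<close>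
    let ?C = "span (K' - {k})"
    have "k \<in> K'" "k \<notin> I" using \<open>k \<in> K\<close> unfolding K_def by auto
    have "k \<notin> ?C" using K'(1) \<open>k \<in> K'\<close> unfolding basis_def indep_def by blast
    have C: "flat X L ?C" using flat_span K'X by blast
    have "?C \<subseteq> B" using span_least[OF B] K'(1) unfolding basis_def by blast
    moreover have "A \<inter> B \<subseteq> ?C"
      using I K'(2) \<open>k \<notin> I\<close> span_mono[of I "K' - {k}"] K'X unfolding basis_def by blast
    ultimately have "span (A \<union> ?C) \<inter> B = ?C"
      using modular_law[OF sr A B C] by blast
    moreover have "span (J \<union> (K - {k})) \<subseteq> span (A \<union> ?C)"
      using J(1) span_superset[of "K' - {k}"] span_subset_points[of "K' - {k}"] AX K'X
      unfolding basis_def K_def by (intro span_mono) auto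
    moreover have "k \<in> B" using \<open>k \<in> K'\<close> K'(1) unfolding basis_def by blast
    ultimately show "k \<notin> span (J \<union> (K - {k}))" using \<open>k \<notin> ?C\<close> by blast
  qed
  have "finite K" "K \<subseteq> X" using K'(3) K'X unfolding K_def by auto
  show "J \<inter> (K' - I) = {}"
    using new span_superset[of "J \<union> _"] unfolding K_def by blast
  show "basis (A \<union> B) (J \<union> (K' - I))"
    unfolding basis_def K_def[symmetric]
  proof (intro conjI)
    show "indep (J \<union> K)"
      using indep_Un[OF sr _ \<open>finite K\<close> \<open>K \<subseteq> X\<close> new] J(1) unfolding basis_def by blast
    show "J \<union> K \<subseteq> A \<union> B" using J(1) K'(1) unfolding basis_def K_def by blast
    have "J \<union> K \<subseteq> X" using JX \<open>K \<subseteq> X\<close> by blast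
    moreover have "K' \<subseteq> J \<union> K" using J(2) unfolding K_def by blast
    ultimately have "span J \<subseteq> span (J \<union> K)" "span K' \<subseteq> span (J \<union> K)"
      using span_mono by auto
    then show "A \<union> B \<subseteq> span (J \<union> K)" using J(1) K'(1) unfolding basis_def by blast
  qed
qed

lemma rank_witness_modular_finite:
  assumes sr: "strongly_regular X L" and A: "flat X L A" and B: "flat X L B"
    and fin: "finite (rank_witness X L A)" "finite (rank_witness X L B)"
  shows "finite (rank_witness X L (A \<inter> B))" "finite (rank_witness X L (A \<union> B))"
    and "card (rank_witness X L (A \<inter> B)) + card (rank_witness X L (A \<union> B))
      = card (rank_witness X L A) + card (rank_witness X L B)"
proof -
  have AX: "A \<subseteq> X" and BX: "B \<subseteq> X" using A B flat_subset_points by auto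
  have gA: "rank_witness X L A \<subseteq> X" "A \<subseteq> span (rank_witness X L A)"
    using generatorsD[OF rank_witness(1)[OF AX]] by auto
  have gB: "rank_witness X L B \<subseteq> X" "B \<subseteq> span (rank_witness X L B)"
    using generatorsD[OF rank_witness(1)[OF BX]] by auto
  obtain I where I: "basis (A \<inter> B) I" "finite I"
    using basis_extend[OF sr fin(1) gA(1), of "A \<inter> B" "{}"] gA(2) indep_empty by blast
  obtain J where J: "basis A J" "finite J" "I \<subseteq> J"
    using basis_extend[OF sr fin(1) gA(1,2) I(2)] I(1) unfolding basis_def by blast
  obtain K' where K': "basis B K'" "finite K'" "I \<subseteq> K'"
    using basis_extend[OF sr fin(2) gB(1,2) I(2)] I(1) unfolding basis_def by blast
  note JK = basis_Un[OF sr A B I(1) J(1,3) K'(1,3,2)]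
  have "card K' = card I + card (K' - I)"
    using card_Un_disjoint[OF I(2), of "K' - I"] K'(2,3) by (simp add: Un_absorb1 Un_Diff_cancel)
  moreover have "card (J \<union> (K' - I)) = card J + card (K' - I)"
    using card_Un_disjoint[OF J(2) _ JK(2)] K'(2) by simp
  moreover note rank_witness_basis[OF sr _ I] rank_witness_basis[OF sr AX J(1,2)]
    rank_witness_basis[OF sr BX K'(1,2)] rank_witness_basis[OF sr _ JK(1)] AX BX J(2) K'(2)
  ultimately show "finite (rank_witness X L (A \<inter> B))" "finite (rank_witness X L (A \<union> B))"
    and "card (rank_witness X L (A \<inter> B)) + card (rank_witness X L (A \<union> B))
      = card (rank_witness X L A) + card (rank_witness X L B)"
    by auto
qed

lemma strongly_regular_imp_modular:
  assumes sr: "strongly_regular X L"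
  shows "modular X L"
  unfolding modular_def
proof (intro allI impI)
  fix A B assume "flat X L A \<and> flat X L B"
  then have A: "flat X L A" and B: "flat X L B" by auto
  then have AX: "A \<subseteq> X" and BX: "B \<subseteq> X" using flat_subset_points by auto
  define RA RB RI RU where "RA = rank_witness X L A" and "RB = rank_witness X L B"
    and "RI = rank_witness X L (A \<inter> B)" and "RU = rank_witness X L (A \<union> B)"
  show "(card_of (RI <+> RU), card_of (RA <+> RB)) \<in> ordIso"
  proof (cases "finite RA \<and> finite RB")
    case True
    with rank_witness_modular_finite[OF sr A B] have "finite (RI <+> RU)" "finite (RA <+> RB)"
      and "card (RI <+> RU) = card (RA <+> RB)"
      unfolding RA_def RB_def RI_def RU_def by (simp_all add: card_Plus)
    then obtain f where "bij_betw f (RI <+> RU) (RA <+> RB)"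
      using finite_same_card_bij by blast
    then show ?thesis using card_of_ordIso by blast
  next
    case False
    \<comment> \<open>then \<open>RU\<close> is infinite and absorbs both cardinal sums\<close>
    have AU: "(card_of RA, card_of RU) \<in> ordLeq" and BU: "(card_of RB, card_of RU) \<in> ordLeq"
      unfolding RA_def RB_def RU_def using rank_witness_mono AX BX by auto
    have IU: "(card_of RI, card_of RU) \<in> ordLeq"
      unfolding RI_def RU_def using AX BX by (intro rank_witness_mono) auto
    have "\<not> finite RU"
      using False card_of_ordLeq_finite[OF AU] card_of_ordLeq_finite[OF BU] by blast
    have "A \<union> B \<subseteq> span (RA \<union> RB)" "RA \<union> RB \<subseteq> X"
      using generatorsD[OF rank_witness(1)[OF AX]] generatorsD[OF rank_witness(1)[OF BX]]
        span_mono[of RA "RA \<union> RB"] span_mono[of RB "RA \<union> RB"]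
      unfolding RA_def RB_def by auto
    then have "(card_of RU, card_of (RA \<union> RB)) \<in> ordLeq"
      unfolding RU_def by (rule rank_witness_le_generator)
    then have "(card_of RU, card_of (RA <+> RB)) \<in> ordLeq"
      using card_of_Un_Plus_ordLeq ordLeq_transitive by blast
    moreover have "(card_of (RA <+> RB), card_of RU) \<in> ordLeq"
      using card_of_Plus_ordLeq_infinite_Field[OF _ AU BU card_of_Card_order] \<open>\<not> finite RU\<close>
      by (simp add: Field_card_of)
    ultimately have "(card_of (RA <+> RB), card_of RU) \<in> ordIso"
      using ordIso_iff_ordLeq by blast
    moreover have "(card_of (RI <+> RU), card_of RU) \<in> ordIso"
      using card_of_Plus_infinite2[OF \<open>\<not> finite RU\<close> IU] .
    ultimately show ?thesis
      using ordIso_symmetric ordIso_transitive by blast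
  qed
qed

end

theorem theorem3p4p1:
  fixes X :: "'a set" and L :: "'a set set"
  assumes "liner X L"
  shows "(hypoparallel 0 X L \<longleftrightarrow> parallel 0 X L)
       \<and> (parallel 0 X L \<longleftrightarrow> (\<forall>A\<in>L. \<forall>B\<in>L. A \<inter> B = {} \<longrightarrow> skew X L A B))
       \<and> ((\<forall>A\<in>L. \<forall>B\<in>L. A \<inter> B = {} \<longrightarrow> skew X L A B) \<longleftrightarrow> projective X L)
       \<and> (projective X L \<longleftrightarrow> strongly_regular X L)
       \<and> (strongly_regular X L \<longleftrightarrow> modular X L)"
proof -
  interpret liner_space X L by (rule liner_space.intro) (rule assms)
  have "hypoparallel 0 X L \<longleftrightarrow> parallel 0 X L"
    unfolding hypoparallel_def parallel_def by simp
  moreover have "parallel 0 X L \<Longrightarrow> \<forall>A\<in>L. \<forall>B\<in>L. A \<inter> B = {} \<longrightarrow> skew X L A B"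
    using parallel_0_imp_skew by blast
  moreover have "modular X L \<Longrightarrow> \<forall>A\<in>L. \<forall>B\<in>L. A \<inter> B = {} \<longrightarrow> skew X L A B"
    using modular_imp_skew by blast
  ultimately show ?thesis
    using skew_imp_parallel_0 skew_imp_projective projective_imp_strongly_regular
      strongly_regular_imp_modular by blast
qed

end
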